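(* If $R$ is a strongly $*$-clean ring, then ${\rm psr}(R)=1$.
   Context: A $*$-ring is a ring with identity with an involution $*$. A projection is $p$ with $p^2=p=p^*$. $R$ is strongly $*$-clean if each element is the sum of a projection and a unit that commute with each other. ${\rm psr}(R)=1$ means: for any $a,b\in R$ with $aR+bR=R$ there is a projection $p$ such that $a+bp$ is a unit. *)

theory Defs
  imports Main
begin

class star_ring = ring_1 +
  fixes invol :: "'a \<Rightarrow> 'a"
  assumes invol_add: "invol (x + y) = invol x + invol y"
    and invol_mult: "invol (x * y) = invol y * invol x"
    and invol_invol: "invol (invol x) = x"

definition is_unit :: "'a::ring_1 \<Rightarrow> bool" where
  "is_unit u \<longleftrightarrow> (\<exists>v. u * v = 1 \<and> v * u = 1)"

definition is_projection :: "'a::star_ring \<Rightarrow> bool" where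
  "is_projection p \<longleftrightarrow> p * p = p \<and> p = invol p"

definition strongly_star_clean :: "'a::star_ring itself \<Rightarrow> bool" where
  "strongly_star_clean _ \<longleftrightarrow>
     (\<forall>a::'a. \<exists>p u. is_projection p \<and> is_unit u \<and> a = p + u \<and> p * u = u * p)"

definition psr_one :: "'a::star_ring itself \<Rightarrow> bool" where
  "psr_one _ \<longleftrightarrow>
     (\<forall>a b::'a. (\<forall>r. \<exists>x y. r = a * x + b * y) \<longrightarrow>
        (\<exists>p. is_projection p \<and> is_unit (a + b * p)))"

end

theory Submission
  imports Defs
begin

text \<open>In a strongly *-clean ring every idempotent is a projection and central, so the ring is
abelian and hence directly finite. Given \<open>ax + by = 1\<close>, write \<open>ax = e + u\<close> with \<open>e\<close> a central
projection and \<open>u\<close> a unit, and work in the two Peirce corners of \<open>e\<close>. On \<open>(1 - e)R\<close> the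
element \<open>a\<close> is right invertible (\<open>ax = u\<close> there), on \<open>eR\<close> so is \<open>b\<close> (\<open>by = -u\<close> there); by
direct finiteness both become units of the corners. In \<open>eR\<close>, writing \<open>-b\<^sup>-\<^sup>1a = f + w\<close>
cleanly gives \<open>a + bf = b(b\<^sup>-\<^sup>1a + f) = -bw\<close>, a unit; hence \<open>a + b(fe)\<close> is a unit of \<open>R\<close>.\<close>

context star_ring
begin

lemma invol_0: "invol 0 = 0"
  using invol_add[of 0 0] by simp

lemma invol_minus: "invol (- x) = - invol x"
  using invol_add[of x "- x"] invol_0 add.inverse_unique[of "invol x" "invol (- x)"] by simp

lemma invol_diff: "invol (x - y) = invol x - invol y"
  using invol_add[of x "- y"] invol_minus[of y] by simp

lemma invol_1: "invol 1 = 1"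
  using invol_mult[of "invol 1" 1] invol_invol[of 1] by simp

end

lemma is_unitE:
  fixes u :: "'a::ring_1"
  assumes "is_unit u"
  obtains v where "u * v = 1" "v * u = 1"
  using assms unfolding is_unit_def by blast

lemma is_unit_1: "is_unit (1::'a::ring_1)"
  unfolding is_unit_def by auto

lemma is_unit_minus: "is_unit (u::'a::ring_1) \<Longrightarrow> is_unit (- u)"
  unfolding is_unit_def by (metis minus_mult_minus)

lemma is_unit_mult:
  fixes u v :: "'a::ring_1"
  assumes "is_unit u" "is_unit v"
  shows "is_unit (u * v)"
proof -
  obtain u' where u': "u * u' = 1" "u' * u = 1" using assms(1) by (rule is_unitE)
  obtain v' where v': "v * v' = 1" "v' * v = 1" using assms(2) by (rule is_unitE)
  have "u * v * (v' * u') = 1" "v' * u' * (u * v) = 1"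
    using u' v' by (simp_all add: mult.assoc flip: mult.assoc[of v v'] mult.assoc[of u' u])
  then show ?thesis unfolding is_unit_def by blast
qed

lemma central_idempotent_corner_mult:
  fixes e :: "'a::ring_1"
  assumes central: "\<And>r. e * r = r * e" and idem: "e * e = e"
  shows "(x * (1 - e) + y * e) * (x' * (1 - e) + y' * e) = x * x' * (1 - e) + y * y' * e"
proof -
  have central': "(1 - e) * r = r * (1 - e)" for r
    using central[of r] by (simp add: algebra_simps)
  have orth: "e * (1 - e) = 0" "(1 - e) * e = 0" and idem': "(1 - e) * (1 - e) = 1 - e"
    using idem by (simp_all add: algebra_simps)
  have "x * (1 - e) * (x' * (1 - e)) = x * x' * (1 - e)"
    by (metis central' idem' mult.assoc)
  moreover have "x * (1 - e) * (y' * e) = 0"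
    by (metis central' orth(2) mult.assoc mult_zero_right)
  moreover have "y * e * (x' * (1 - e)) = 0"
    by (metis central orth(1) mult.assoc mult_zero_right)
  moreover have "y * e * (y' * e) = y * y' * e"
    by (metis central idem mult.assoc)
  ultimately show ?thesis by (simp add: distrib_left distrib_right)
qed

lemma central_idempotent_corner_unit:
  fixes e :: "'a::ring_1"
  assumes central: "\<And>r. e * r = r * e" and idem: "e * e = e"
    and "is_unit u" "is_unit v"
  shows "is_unit (u * (1 - e) + v * e)"
proof -
  obtain u' where u': "u * u' = 1" "u' * u = 1" using \<open>is_unit u\<close> by (rule is_unitE)
  obtain v' where v': "v * v' = 1" "v' * v = 1" using \<open>is_unit v\<close> by (rule is_unitE)
  have "(u * (1 - e) + v * e) * (u' * (1 - e) + v' * e) = 1"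
    "(u' * (1 - e) + v' * e) * (u * (1 - e) + v * e) = 1"
    unfolding central_idempotent_corner_mult[OF central idem] using u' v' by simp_all
  then show ?thesis unfolding is_unit_def by blast
qed

lemma strongly_star_clean_idempotent_is_projection:
  fixes e :: "'a::star_ring"
  assumes sc: "strongly_star_clean TYPE('a)" and idem: "e * e = e"
  shows "is_projection e"
proof -
  obtain p u where p: "is_projection p" and "is_unit u" and eq: "e = p + u"
    and comm: "p * u = u * p"
    using sc unfolding strongly_star_clean_def by blast
  have pp: "p * p = p" and p_adj: "invol p = p"
    using p unfolding is_projection_def by auto
  have u: "u = e - p" using eq by simp
  have ep: "e * p = p * e" using eq comm by (simp add: algebra_simps pp)
  have assoc_rules: "p * (e * x) = e * (p * x)" "e * (e * x) = e * x" "p * (p * x) = p * x" for x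
    by (simp_all add: ep idem pp flip: mult.assoc)
  have u_sq: "u * u = e - (e * p + e * p) + p"
    unfolding u by (simp add: algebra_simps idem pp ep)
  \<comment> \<open>\<open>u\<^sup>3 = u\<close> for the difference of two commuting idempotents, so the unit \<open>u\<close> is an involution.\<close>
  have "u * u * u = u"
    unfolding u by (simp add: algebra_simps idem pp ep assoc_rules)
  moreover obtain v where "u * v = 1" using \<open>is_unit u\<close> by (rule is_unitE)
  ultimately have "u * u = 1"
    by (metis mult.assoc mult_1_right)
  then have sum: "e - (e * p + e * p) + p = 1" using u_sq by simp
  then have "e * (e - (e * p + e * p) + p) = e" by simp
  then have "e * p = 0"
    by (simp add: algebra_simps idem flip: mult.assoc)
  then have "e = 1 - p" using sum by (simp add: algebra_simps)
  then have "invol e = e" by (simp add: invol_diff invol_1 p_adj)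
  then show ?thesis unfolding is_projection_def using idem by simp
qed

lemma strongly_star_clean_idempotent_central:
  fixes e :: "'a::star_ring"
  assumes sc: "strongly_star_clean TYPE('a)" and idem: "e * e = e"
  shows "e * r = r * e"
proof -
  have e_adj: "invol e = e"
    using strongly_star_clean_idempotent_is_projection[OF sc idem] unfolding is_projection_def by simp
  have orth: "e * (1 - e) = 0" "(1 - e) * e = 0" using idem by (simp_all add: algebra_simps)
  \<comment> \<open>\<open>e + es(1 - e)\<close> is idempotent, hence self-adjoint; comparing with its adjoint kills \<open>es(1 - e)\<close>.\<close>
  have upper: "e * s * (1 - e) = 0" for s
  proof -
    define f where "f = e + e * s * (1 - e)"
    have "f * f = f" unfolding f_def
      by (simp add: algebra_simps idem mult.assoc) (simp add: idem flip: mult.assoc)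
    then have "invol f = f"
      using strongly_star_clean_idempotent_is_projection[OF sc] unfolding is_projection_def by metis
    then have "e + (1 - e) * invol s * e = e + e * s * (1 - e)"
      unfolding f_def by (simp add: invol_add invol_mult invol_diff invol_1 e_adj mult.assoc)
    then have "e * ((1 - e) * invol s * e) = e * (e * s * (1 - e))" by simp
    then show ?thesis by (simp add: orth idem flip: mult.assoc)
  qed
  have "(1 - e) * r * e = invol (e * invol r * (1 - e))"
    by (simp add: invol_mult invol_diff invol_1 invol_invol e_adj mult.assoc)
  then have lower: "(1 - e) * r * e = 0" using upper[of "invol r"] invol_0 by simp
  from upper[of r] have "e * r = e * r * e" by (simp add: algebra_simps) (metis idem mult.assoc)
  moreover from lower have "r * e = e * r * e" by (simp add: algebra_simps)
  ultimately show ?thesis by simp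
qed

lemma strongly_star_cleanE:
  fixes a :: "'a::star_ring"
  assumes sc: "strongly_star_clean TYPE('a)"
  obtains e u where "e * e = e" "\<And>r. e * r = r * e" "is_unit u" "a = e + u"
proof -
  obtain e u where "is_projection e" "is_unit u" "a = e + u"
    using sc unfolding strongly_star_clean_def by blast
  moreover have "e * e = e" using \<open>is_projection e\<close> unfolding is_projection_def by simp
  ultimately show ?thesis
    using that strongly_star_clean_idempotent_central[OF sc] by blast
qed

lemma strongly_star_clean_directly_finite:
  fixes s t :: "'a::star_ring"
  assumes sc: "strongly_star_clean TYPE('a)" and st: "s * t = 1"
  shows "is_unit s"
proof -
  have "t * s * (t * s) = t * s" using st by (simp add: mult.assoc flip: mult.assoc[of s t])
  then have "t * s * s = s * (t * s)" by (rule strongly_star_clean_idempotent_central[OF sc])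
  also have "\<dots> = s" using st by (simp flip: mult.assoc)
  finally have "t * s * s * t = s * t" by simp
  then have "t * s = 1" using st by (simp add: mult.assoc)
  then show ?thesis using st unfolding is_unit_def by blast
qed

lemma strongly_star_clean_unit_left_factor:
  fixes s t :: "'a::star_ring"
  assumes sc: "strongly_star_clean TYPE('a)" and "is_unit (s * t)"
  shows "is_unit s"
proof -
  obtain w where "s * t * w = 1" using \<open>is_unit (s * t)\<close> by (rule is_unitE)
  then have "s * (t * w) = 1" by (simp add: mult.assoc)
  then show ?thesis by (rule strongly_star_clean_directly_finite[OF sc])
qed

lemma strongly_star_clean_unimodular_corner_units:
  fixes a b x y e u :: "'a::star_ring"
  assumes sc: "strongly_star_clean TYPE('a)"
    and central: "\<And>r. e * r = r * e" and idem: "e * e = e"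
    and "is_unit u" and clean: "a * x = e + u" and unimodular: "a * x + b * y = 1"
  shows "is_unit (a * (1 - e) + 1 * e)" and "is_unit (1 * (1 - e) + b * e)"
proof -
  note corner_mult = central_idempotent_corner_mult[OF central idem]
  note corner_unit = central_idempotent_corner_unit[OF central idem]
  have "a * x * (1 - e) = u * (1 - e)"
    using clean idem by (simp add: algebra_simps)
  then have "(a * (1 - e) + 1 * e) * (x * (1 - e) + 1 * e) = u * (1 - e) + 1 * e"
    unfolding corner_mult by simp
  then show "is_unit (a * (1 - e) + 1 * e)"
    using strongly_star_clean_unit_left_factor[OF sc] corner_unit[OF \<open>is_unit u\<close> is_unit_1] by metis
  have "b * y = 1 - (e + u)" using unimodular clean by (simp add: algebra_simps)
  then have "b * y * e = (1 - (e + u)) * e" by simp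
  also have "\<dots> = (- u) * e" using idem by (simp add: algebra_simps)
  finally have "b * y * e = (- u) * e" .
  then have "(1 * (1 - e) + b * e) * (1 * (1 - e) + y * e) = 1 * (1 - e) + (- u) * e"
    unfolding corner_mult by simp
  then show "is_unit (1 * (1 - e) + b * e)"
    using strongly_star_clean_unit_left_factor[OF sc]
      corner_unit[OF is_unit_1 is_unit_minus[OF \<open>is_unit u\<close>]] by metis
qed

lemma strongly_star_clean_corner_completion:
  fixes a b e :: "'a::star_ring"
  assumes sc: "strongly_star_clean TYPE('a)"
    and central: "\<And>r. e * r = r * e" and idem: "e * e = e"
    and unit_c: "is_unit (1 * (1 - e) + b * e)"
  obtains q V where "q * q = q" "is_unit V" "a * e + b * q = V * e"
proof -
  define c where "c = 1 * (1 - e) + b * e"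
  obtain c' where c': "c * c' = 1" "c' * c = 1" using unit_c unfolding c_def by (rule is_unitE)
  obtain f w where f_idem: "f * f = f" and f_central: "\<And>r. f * r = r * f"
    and "is_unit w" and clean: "- (c' * a * e) = f + w"
    using strongly_star_cleanE[OF sc, of "- (c' * a * e)"] by blast
  define V where "V = c * (c' * a * e + f)"
  have "c' * a * e = - (f + w)" using clean by (simp add: minus_equation_iff)
  then have "c' * a * e + f = - w" by simp
  then have "is_unit V"
    unfolding V_def using unit_c c_def is_unit_mult is_unit_minus[OF \<open>is_unit w\<close>] by metis
  have "c * f * e = b * (f * e)"
  proof -
    have "c * f * e = (1 - e) * e * f + b * e * e * f"
      unfolding c_def by (simp add: algebra_simps f_central mult.assoc)
    then show ?thesis by (simp add: idem f_central algebra_simps mult.assoc)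
  qed
  moreover have "c * (c' * a * e) * e = a * e"
    using c' idem by (simp add: mult.assoc flip: mult.assoc[of c c'])
  ultimately have "a * e + b * (f * e) = V * e"
    unfolding V_def by (simp add: distrib_left distrib_right)
  moreover have "f * e * (f * e) = f * e" by (metis central idem f_idem mult.assoc)
  ultimately show ?thesis using that \<open>is_unit V\<close> by blast
qed

theorem corollary4p6:
  assumes "strongly_star_clean TYPE('a::star_ring)"
  shows "psr_one TYPE('a)"
  unfolding psr_one_def
proof (intro allI impI)
  note sc = assms
  fix a b :: 'a
  assume "\<forall>r. \<exists>x y. r = a * x + b * y"
  then obtain x y where unimodular: "a * x + b * y = 1" by metis
  obtain e u where idem: "e * e = e" and central: "\<And>r. e * r = r * e"
    and "is_unit u" and clean: "a * x = e + u"
    using strongly_star_cleanE[OF sc, of "a * x"] by blast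
  note corner_units = strongly_star_clean_unimodular_corner_units[OF sc central idem
      \<open>is_unit u\<close> clean unimodular]
  obtain q V where "q * q = q" "is_unit V" and completion: "a * e + b * q = V * e"
    using strongly_star_clean_corner_completion[OF sc central idem corner_units(2)] by blast
  have "(a * (1 - e) + 1 * e) * (1 * (1 - e) + V * e) = a * 1 * (1 - e) + 1 * V * e"
    by (rule central_idempotent_corner_mult[OF central idem])
  also have "\<dots> = a + b * q" using completion by (simp add: algebra_simps)
  finally have "is_unit (a + b * q)"
    using is_unit_mult[OF corner_units(1)]
      central_idempotent_corner_unit[OF central idem is_unit_1 \<open>is_unit V\<close>] by metis
  moreover have "is_projection q"
    using strongly_star_clean_idempotent_is_projection[OF sc \<open>q * q = q\<close>] .
  ultimately show "\<exists>p. is_projection p \<and> is_unit (a + b * p)" by blast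
qed

end
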